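(* Let $(x,y,z)\in E$ be a $C$ or $D$ representation class that is not a $\mathrm{Pin}(2)$ representation class. Then there exists $\gamma\in\Gamma$ such that $\gamma(x,y,z)$ is $S$-equivalent to one of the triples $$(\sqrt2,1,\sqrt2),\ (1,1,1),\ (-2s,2s,2s),\ (-2s,-2s,1),\ (2r,-2r,-2r),\ (2r,1,2r),\ (1,2r,1),\ (1,2s,-1),\ (1,2r,2s),$$ where $r=\frac{\sqrt5+1}{4}$ and $s=\frac{\sqrt5-1}{4}$.
   Context: $M$ is a torus with one boundary component; $\pi_1(M)$ is free on $X,Y$. $E=\operatorname{Hom}(\pi_1(M),\mathrm{SU}(2))/\mathrm{SU}(2)$ is identified via global coordinates $[\sigma]\mapsto(\operatorname{tr}\sigma(X),\operatorname{tr}\sigma(Y),\operatorname{tr}\sigma(XY))$ with $\{(x,y,z)\in[-2,2]^3:-2\le x^2+y^2+z^2-xyz-2\le2\}$. $\Gamma$ (mapping class group of $M$ fixing $\partial M$) acts on $E$, generated by $\tau_X(x,y,z)=(x,z,xz-y)$ and $\tau_Y(x,y,z)=(z,y,yz-x)$. Let $p:\mathrm{SU}(2)\to\mathrm{SO}(3)$ be the double cover; $C=p^{-1}(\text{rotation group of the cube})$ and $D=p^{-1}(\text{rotation group of the regular dodecahedron})$. In the quaternionic model ($1,\mathrm{i},\mathrm{j},\mathrm{k}$ = $\begin{pmatrix}1&0\\0&1\end{pmatrix},\begin{pmatrix}i&0\\0&-i\end{pmatrix},\begin{pmatrix}0&1\\-1&0\end{pmatrix},\begin{pmatrix}0&i\\i&0\end{pmatrix}$),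 $\mathrm{Pin}(2)=p^{-1}(\mathrm{O}(2))=\{\cos\theta+\sin\theta\,\mathrm{j}\}\cup\{\cos\theta\,\mathrm{k}+\sin\theta\,\mathrm{i}\}$. For a subgroup $G\subset\mathrm{SU}(2)$, a point of $E$ is a $G$ representation class if some representative takes values in $G$ (equivalently, in a conjugate of $G$). Two triples are $S$-equivalent if one is obtained from the other by a permutation of coordinates combined with changing the signs of an even number of coordinates. *)

theory Defs
  imports "HOL-Analysis.Analysis"
begin

type_synonym cmat2 = "complex^2^2"
type_synonym triple = "real \<times> real \<times> real"

definition mat2 :: "complex \<Rightarrow> complex \<Rightarrow> complex \<Rightarrow> complex \<Rightarrow> cmat2" where
  "mat2 a b c d = (\<chi> i j. if i = 1 then (if j = 1 then a else b) else (if j = 1 then c else d))"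

definition cadj :: "cmat2 \<Rightarrow> cmat2" where
  "cadj A = (\<chi> i j. cnj (A $ j $ i))"

definition SU2 :: "cmat2 set" where
  "SU2 = {A. A ** cadj A = mat 1 \<and> det A = 1}"

definition qI :: cmat2 where "qI = mat2 \<i> 0 0 (- \<i>)"
definition qJ :: cmat2 where "qJ = mat2 0 1 (-1) 0"
definition qK :: cmat2 where "qK = mat2 0 \<i> \<i> 0"

(* identification of R^3 with su(2) (pure quaternions) *)
definition emb3 :: "triple \<Rightarrow> cmat2" where
  "emb3 v = (case v of (a, b, c) \<Rightarrow>
     a *\<^sub>R qI + b *\<^sub>R qJ + c *\<^sub>R qK)"

(* p^{-1}(symmetry rotations of a polyhedron with vertex set V): p(A) acts on R^3 = su(2)
   by v \<mapsto> A v A^*; a rotation is a symmetry of the solid iff it permutes its vertices *)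
definition preimage_rot :: "triple set \<Rightarrow> cmat2 set" where
  "preimage_rot V = {A \<in> SU2. \<forall>v\<in>V. A ** emb3 v ** cadj A \<in> emb3 ` V}"

definition cube_vertices :: "triple set" where
  "cube_vertices = {(a, b, c). a \<in> {1, -1} \<and> b \<in> {1, -1} \<and> c \<in> {1, -1}}"

definition golden :: real where "golden = (1 + sqrt 5) / 2"

definition dodecahedron_vertices :: "triple set" where
  "dodecahedron_vertices = cube_vertices
     \<union> {(0, b, c) | b c. b \<in> {1/golden, -1/golden} \<and> c \<in> {golden, -golden}}
     \<union> {(a, b, 0) | a b. a \<in> {1/golden, -1/golden} \<and> b \<in> {golden, -golden}}
     \<union> {(a, 0, c) | a c. a \<in> {golden, -golden} \<and> c \<in> {1/golden, -1/golden}}"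

definition Cgrp :: "cmat2 set" where "Cgrp = preimage_rot cube_vertices"
definition Dgrp :: "cmat2 set" where "Dgrp = preimage_rot dodecahedron_vertices"

definition Pin2 :: "cmat2 set" where
  "Pin2 = {(cos \<theta>) *\<^sub>R mat 1 + (sin \<theta>) *\<^sub>R qJ | \<theta>. True}
        \<union> {(cos \<theta>) *\<^sub>R qK + (sin \<theta>) *\<^sub>R qI | \<theta>. True}"

definition Eset :: "triple set" where
  "Eset = {(x, y, z). x \<in> {-2..2} \<and> y \<in> {-2..2} \<and> z \<in> {-2..2} \<and>
            -2 \<le> x^2 + y^2 + z^2 - x*y*z - 2 \<and> x^2 + y^2 + z^2 - x*y*z - 2 \<le> 2}"

(* [sigma] has coordinates (tr sigma(X), tr sigma(Y), tr sigma(XY)); pi_1 is free on X, Y,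
   so a representation is determined by A = sigma(X), B = sigma(Y). Traces are conjugation
   invariant, so "some representative with values in a conjugate of G" is the same as
   "some representative with values in G". *)
definition rep_class_in :: "cmat2 set \<Rightarrow> triple \<Rightarrow> bool" where
  "rep_class_in G t \<longleftrightarrow> (\<exists>A\<in>G. \<exists>B\<in>G.
      trace A = complex_of_real (fst t) \<and> trace B = complex_of_real (fst (snd t)) \<and>
      trace (A ** B) = complex_of_real (snd (snd t)))"

definition tauX :: "triple \<Rightarrow> triple" where
  "tauX t = (case t of (x, y, z) \<Rightarrow> (x, z, x*z - y))"
definition tauY :: "triple \<Rightarrow> triple" where
  "tauY t = (case t of (x, y, z) \<Rightarrow> (z, y, y*z - x))"
definition tauX_inv :: "triple \<Rightarrow> triple" where
  "tauX_inv t = (case t of (x, y, z) \<Rightarrow> (x, x*y - z, y))"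
definition tauY_inv :: "triple \<Rightarrow> triple" where
  "tauY_inv t = (case t of (x, y, z) \<Rightarrow> (y*x - z, y, x))"

inductive_set Gamma :: "(triple \<Rightarrow> triple) set" where
  Gid: "id \<in> Gamma"
| GX: "g \<in> Gamma \<Longrightarrow> tauX \<circ> g \<in> Gamma"
| GY: "g \<in> Gamma \<Longrightarrow> tauY \<circ> g \<in> Gamma"
| GXi: "g \<in> Gamma \<Longrightarrow> tauX_inv \<circ> g \<in> Gamma"
| GYi: "g \<in> Gamma \<Longrightarrow> tauY_inv \<circ> g \<in> Gamma"

definition S_equiv :: "triple \<Rightarrow> triple \<Rightarrow> bool" where
  "S_equiv t u \<longleftrightarrow> (case t of (a, b, c) \<Rightarrow>
     \<exists>p \<in> {(a,b,c), (a,c,b), (b,a,c), (b,c,a), (c,a,b), (c,b,a)}.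
     \<exists>e1 e2 e3 :: real. e1 \<in> {1, -1} \<and> e2 \<in> {1, -1} \<and> e3 \<in> {1, -1} \<and> e1 * e2 * e3 = 1 \<and>
       u = (e1 * fst p, e2 * fst (snd p), e3 * snd (snd p)))"

end

theory Submission
  imports Defs
begin

text \<open>Every element of \<open>C\<close> or \<open>D\<close> lies over a rotation permuting the vertices of the cube or the
  dodecahedron. Such a rotation is determined by the images of the three cube vertices
  \<open>(1,1,1), (1,-1,-1), (-1,1,-1)\<close>, and enumerating the possible images shows that the traces of
  \<open>C\<close> lie in \<open>{0, \<plusminus>1, \<plusminus>\<surd>2, \<plusminus>2} \<subseteq> \<int>[\<surd>2]\<close> and those of \<open>D\<close> in
  \<open>{0, \<plusminus>1, \<plusminus>\<phi>, \<plusminus>(\<phi> - 1), \<plusminus>2} \<subseteq> \<int>[\<phi>]\<close>. The coordinates of a representation class and of all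
  its \<open>\<Gamma>\<close>-images are traces, so they lie in a finite grid of quadratic integers. A computation over
  the grid shows that every grid point either is a Pin(2) class (commutator trace \<open>2\<close> or two
  vanishing coordinates), or leaves the grid after at most four moves \<open>\<tau>\<^sub>X, \<tau>\<^sub>Y\<close>, or is taken by
  at most one move \<open>\<tau>\<^sub>X\<^sup>\<plusminus>\<^sup>1, \<tau>\<^sub>Y\<^sup>\<plusminus>\<^sup>1\<close> to a triple \<open>S\<close>-equivalent to one of the listed ones.\<close>

section \<open>\<open>SU(2)\<close> and rotations\<close>

lemma cmat2_eq_iff:
  "(M::cmat2) = N \<longleftrightarrow> M$1$1 = N$1$1 \<and> M$1$2 = N$1$2 \<and> M$2$1 = N$2$1 \<and> M$2$2 = N$2$2"
  by (auto simp: vec_eq_iff forall_2)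

lemma mat2_nth [simp]:
  "mat2 a b c d $1$1 = a" "mat2 a b c d $1$2 = b" "mat2 a b c d $2$1 = c" "mat2 a b c d $2$2 = d"
  by (simp_all add: mat2_def)

lemma mat2_eta: "(M::cmat2) = mat2 (M$1$1) (M$1$2) (M$2$1) (M$2$2)"
  by (simp add: cmat2_eq_iff)

lemma mat2_eq_iff: "mat2 a b c d = mat2 a' b' c' d' \<longleftrightarrow> a = a' \<and> b = b' \<and> c = c' \<and> d = d'"
  by (simp add: cmat2_eq_iff)

lemma mat2_mult:
  "mat2 a b c d ** mat2 a' b' c' d' = mat2 (a*a' + b*c') (a*b' + b*d') (c*a' + d*c') (c*b' + d*d')"
  by (simp add: cmat2_eq_iff matrix_matrix_mult_def sum_2)

lemma trace_mat2: "trace (mat2 a b c d) = a + d"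
  by (simp add: trace_def sum_2)

lemma det_mat2: "det (mat2 a b c d) = a * d - b * c"
  by (simp add: det_2)

lemma cadj_mat2: "cadj (mat2 a b c d) = mat2 (cnj a) (cnj c) (cnj b) (cnj d)"
  by (simp add: cmat2_eq_iff cadj_def)

lemma mat_1_eq_mat2: "(mat 1 :: cmat2) = mat2 1 0 0 1"
  by (simp add: cmat2_eq_iff mat_def)

lemma scaleR_mat2: "r *\<^sub>R mat2 a b c d = mat2 (r *\<^sub>R a) (r *\<^sub>R b) (r *\<^sub>R c) (r *\<^sub>R d)"
  by (simp add: cmat2_eq_iff)

lemma add_mat2: "mat2 a b c d + mat2 a' b' c' d' = mat2 (a + a') (b + b') (c + c') (d + d')"
  by (simp add: cmat2_eq_iff)

lemma cadj_mult: "cadj ((A::cmat2) ** B) = cadj B ** cadj A"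
proof -
  obtain a b c d a' b' c' d' where "A = mat2 a b c d" "B = mat2 a' b' c' d'"
    using mat2_eta by metis
  then show ?thesis by (simp add: mat2_mult cadj_mat2 mat2_eq_iff algebra_simps)
qed

lemma trace_mult_square_left:
  "trace ((A::cmat2) ** (A ** B)) = trace A * trace (A ** B) - det A * trace B"
proof -
  obtain a b c d a' b' c' d' where "A = mat2 a b c d" "B = mat2 a' b' c' d'"
    using mat2_eta by metis
  then show ?thesis by (simp add: mat2_mult trace_mat2 det_mat2 algebra_simps)
qed

lemma trace_mult_square_right:
  "trace (((A::cmat2) ** B) ** B) = trace B * trace (A ** B) - det B * trace A"
proof -
  obtain a b c d a' b' c' d' where "A = mat2 a b c d" "B = mat2 a' b' c' d'"
    using mat2_eta by metis
  then show ?thesis by (simp add: mat2_mult trace_mat2 det_mat2 algebra_simps)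
qed

definition quat_mat :: "real \<Rightarrow> real \<Rightarrow> real \<Rightarrow> real \<Rightarrow> cmat2" where
  "quat_mat a b c d = mat2 (Complex a b) (Complex c d) (Complex (- c) d) (Complex a (- b))"

lemma trace_quat_mat: "trace (quat_mat a b c d) = of_real (2 * a)"
  by (simp add: quat_mat_def trace_mat2 complex_eq_iff)

lemma SU2_mult: "A \<in> SU2 \<Longrightarrow> B \<in> SU2 \<Longrightarrow> A ** B \<in> SU2"
  unfolding SU2_def
  by (simp add: cadj_mult det_mul matrix_mul_assoc) (metis matrix_mul_assoc matrix_mul_rid)

lemma SU2_det: "A \<in> SU2 \<Longrightarrow> det A = 1"
  by (simp add: SU2_def)

lemma SU2_entries:
  fixes a b c d :: complex
  assumes unit: "a * cnj a + b * cnj b = 1" and orth: "a * cnj c + b * cnj d = 0"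
    and det: "a * d - b * c = 1"
  shows "d = cnj a" "c = - cnj b"
proof -
  have orth': "cnj a * c + cnj b * d = 0"
    using arg_cong[OF orth, of cnj] by simp
  have "cnj a = cnj a * (a * d - b * c)" using det by simp
  also have "\<dots> = (a * cnj a) * d - b * (cnj a * c)" by (simp add: algebra_simps)
  also have "cnj a * c = - cnj b * d" using orth' by (simp add: eq_neg_iff_add_eq_0)
  finally have "cnj a = (a * cnj a + b * cnj b) * d" by (simp add: algebra_simps)
  then show "d = cnj a" using unit by simp
  have "- cnj b = - cnj b * (a * d - b * c)" using det by simp
  also have "\<dots> = - a * (cnj b * d) + (b * cnj b) * c" by (simp add: algebra_simps)
  also have "cnj b * d = - cnj a * c" using orth' by (simp add: eq_neg_iff_add_eq_0 add.commute)
  finally have "- cnj b = (a * cnj a + b * cnj b) * c" by (simp add: algebra_simps)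
  then show "c = - cnj b" using unit by simp
qed

lemma SU2_quat_mat:
  assumes "A \<in> SU2"
  obtains a b c d where "A = quat_mat a b c d" "a\<^sup>2 + b\<^sup>2 + c\<^sup>2 + d\<^sup>2 = 1"
proof -
  define p q r s where "p = A$1$1" "q = A$1$2" "r = A$2$1" "s = A$2$2"
  have A: "A = mat2 p q r s" using mat2_eta[of A] by (simp add: p_q_r_s_def)
  have "A ** cadj A = mat 1" "det A = 1" using assms by (auto simp: SU2_def)
  then have eqs: "p * cnj p + q * cnj q = 1" "p * cnj r + q * cnj s = 0" "p * s - q * r = 1"
    unfolding A cadj_mat2 mat2_mult mat_1_eq_mat2 det_mat2 mat2_eq_iff by auto
  have "A = quat_mat (Re p) (Im p) (Re q) (Im q)"
    unfolding A quat_mat_def SU2_entries[OF eqs] by (simp add: mat2_eq_iff complex_eq_iff)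
  moreover have "(Re p)\<^sup>2 + (Im p)\<^sup>2 + (Re q)\<^sup>2 + (Im q)\<^sup>2 = 1"
    using arg_cong[OF eqs(1), of Re] by (simp add: power2_eq_square)
  ultimately show ?thesis using that by blast
qed

definition quat_rot :: "real \<Rightarrow> real \<Rightarrow> real \<Rightarrow> real \<Rightarrow> triple \<Rightarrow> triple" where
  "quat_rot a b c d v = (case v of (x, y, z) \<Rightarrow>
     ((a*a + b*b - c*c - d*d) * x + 2 * (b*c - a*d) * y + 2 * (b*d + a*c) * z,
      2 * (b*c + a*d) * x + (a*a - b*b + c*c - d*d) * y + 2 * (c*d - a*b) * z,
      2 * (b*d - a*c) * x + 2 * (c*d + a*b) * y + (a*a - b*b - c*c + d*d) * z))"

lemma emb3_eq_mat2: "emb3 (x, y, z) = mat2 (Complex 0 x) (Complex y z) (Complex (- y) z) (Complex 0 (- x))"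
  by (simp add: emb3_def qI_def qJ_def qK_def scaleR_mat2 add_mat2 mat2_eq_iff complex_eq_iff)

lemma inj_emb3: "inj emb3"
  by (rule injI) (auto simp: emb3_eq_mat2 mat2_eq_iff complex_eq_iff)

lemma quat_mat_conj_emb3:
  "quat_mat a b c d ** emb3 v ** cadj (quat_mat a b c d) = emb3 (quat_rot a b c d v)"
  by (cases v) (simp add: quat_mat_def emb3_eq_mat2 cadj_mat2 mat2_mult quat_rot_def mat2_eq_iff
      complex_eq_iff algebra_simps)

lemma quat_rot_mem_preimage_rot:
  assumes "quat_mat a b c d \<in> preimage_rot V" "v \<in> V"
  shows "quat_rot a b c d v \<in> V"
proof -
  obtain v' where "v' \<in> V" "emb3 (quat_rot a b c d v) = emb3 v'"
    using assms by (auto simp: preimage_rot_def quat_mat_conj_emb3)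
  then show ?thesis using inj_emb3 by (metis injD)
qed

lemma preimage_rot_subset_SU2: "preimage_rot V \<subseteq> SU2"
  unfolding preimage_rot_def by auto

lemma preimage_rot_mult:
  assumes A: "A \<in> preimage_rot V" and B: "B \<in> preimage_rot V"
  shows "A ** B \<in> preimage_rot V"
proof -
  have "(A ** B) ** emb3 v ** cadj (A ** B) \<in> emb3 ` V" if "v \<in> V" for v
  proof -
    obtain v' where "v' \<in> V" "B ** emb3 v ** cadj B = emb3 v'"
      using B \<open>v \<in> V\<close> unfolding preimage_rot_def by blast
    moreover have "(A ** B) ** emb3 v ** cadj (A ** B) = A ** (B ** emb3 v ** cadj B) ** cadj A"
      by (simp add: cadj_mult matrix_mul_assoc)
    ultimately show ?thesis using A unfolding preimage_rot_def by auto
  qed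
  with A B SU2_mult show ?thesis unfolding preimage_rot_def by blast
qed

fun triple_product :: "triple \<Rightarrow> triple \<Rightarrow> triple \<Rightarrow> real" where
  "triple_product (x1, x2, x3) (y1, y2, y3) (z1, z2, z3) =
     x1 * (y2 * z3 - y3 * z2) + x2 * (y3 * z1 - y1 * z3) + x3 * (y1 * z2 - y2 * z1)"

text \<open>If \<open>w\<^sub>i = f v\<^sub>i\<close> for a linear map \<open>f\<close> and the frame \<open>v\<^sub>1, v\<^sub>2, v\<^sub>3 = (1,1,1), (1,-1,-1), (-1,1,-1)\<close>,
  then \<open>frame_map w\<^sub>1 w\<^sub>2 w\<^sub>3 = 2 f\<close> and \<open>frame_trace w\<^sub>1 w\<^sub>2 w\<^sub>3 = 2 tr f\<close>, because the standard basis
  vectors are \<open>(v\<^sub>1 + v\<^sub>2)/2, (v\<^sub>1 + v\<^sub>3)/2, -(v\<^sub>2 + v\<^sub>3)/2\<close>.\<close>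

fun frame_map :: "triple \<Rightarrow> triple \<Rightarrow> triple \<Rightarrow> triple \<Rightarrow> triple" where
  "frame_map w1 w2 w3 (x, y, z) = x *\<^sub>R (w1 + w2) + y *\<^sub>R (w1 + w3) - z *\<^sub>R (w2 + w3)"

definition frame_trace :: "triple \<Rightarrow> triple \<Rightarrow> triple \<Rightarrow> real" where
  "frame_trace w1 w2 w3 = fst (w1 + w2) + fst (snd (w1 + w3)) - snd (snd (w2 + w3))"

context
  fixes a b c d :: real
begin

lemma inner_quat_rot:
  "inner (quat_rot a b c d u) (quat_rot a b c d v) = (a\<^sup>2 + b\<^sup>2 + c\<^sup>2 + d\<^sup>2)\<^sup>2 * inner u v"
proof -
  obtain x1 x2 x3 y1 y2 y3 where uv: "u = (x1, x2, x3)" "v = (y1, y2, y3)"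
    by (cases u, cases v) auto
  show ?thesis unfolding uv by (simp add: quat_rot_def) algebra
qed

lemma triple_product_quat_rot:
  "triple_product (quat_rot a b c d u) (quat_rot a b c d v) (quat_rot a b c d v') =
     (a\<^sup>2 + b\<^sup>2 + c\<^sup>2 + d\<^sup>2)^3 * triple_product u v v'"
proof -
  obtain x1 x2 x3 y1 y2 y3 z1 z2 z3 where uvv': "u = (x1, x2, x3)" "v = (y1, y2, y3)" "v' = (z1, z2, z3)"
    by (cases u, cases v, cases v') auto
  show ?thesis unfolding uvv' by (simp add: quat_rot_def) algebra
qed

lemma frame_map_quat_rot:
  "frame_map (quat_rot a b c d (1, 1, 1)) (quat_rot a b c d (1, -1, -1)) (quat_rot a b c d (-1, 1, -1)) v =
     2 *\<^sub>R quat_rot a b c d v"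
  by (cases v) (simp add: quat_rot_def algebra_simps)

lemma frame_trace_quat_rot:
  "frame_trace (quat_rot a b c d (1, 1, 1)) (quat_rot a b c d (1, -1, -1)) (quat_rot a b c d (-1, 1, -1)) =
     2 * (3 * a\<^sup>2 - b\<^sup>2 - c\<^sup>2 - d\<^sup>2)"
  by (simp add: frame_trace_def quat_rot_def power2_eq_square algebra_simps)

end

section \<open>Representation classes\<close>

lemma Gamma_generators: "id \<in> Gamma" "tauX \<in> Gamma" "tauY \<in> Gamma" "tauX_inv \<in> Gamma" "tauY_inv \<in> Gamma"
  using Gamma.GX[OF Gamma.Gid] Gamma.GY[OF Gamma.Gid] Gamma.GXi[OF Gamma.Gid] Gamma.GYi[OF Gamma.Gid]
  by (simp_all add: Gamma.Gid)

locale mult_closed_SU2 =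
  fixes G :: "cmat2 set"
  assumes subset_SU2: "G \<subseteq> SU2"
    and mult_closed: "A \<in> G \<Longrightarrow> B \<in> G \<Longrightarrow> A ** B \<in> G"
begin

lemma rep_class_in_tauX:
  assumes "rep_class_in G t"
  shows "rep_class_in G (tauX t)"
proof -
  obtain x y z where t: "t = (x, y, z)" by (cases t)
  obtain A B where AB: "A \<in> G" "B \<in> G" "trace A = of_real x" "trace B = of_real y" "trace (A ** B) = of_real z"
    using assms unfolding t rep_class_in_def by auto
  have "trace (A ** (A ** B)) = of_real (x * z - y)"
    using AB subset_SU2 SU2_det[of A] by (auto simp: trace_mult_square_left)
  with AB mult_closed show ?thesis unfolding rep_class_in_def t tauX_def by auto
qed

lemma rep_class_in_tauY:
  assumes "rep_class_in G t"
  shows "rep_class_in G (tauY t)"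
proof -
  obtain x y z where t: "t = (x, y, z)" by (cases t)
  obtain A B where AB: "A \<in> G" "B \<in> G" "trace A = of_real x" "trace B = of_real y" "trace (A ** B) = of_real z"
    using assms unfolding t rep_class_in_def by auto
  have "trace ((A ** B) ** B) = of_real (y * z - x)"
    using AB subset_SU2 SU2_det[of B] by (auto simp: trace_mult_square_right)
  with AB mult_closed show ?thesis unfolding rep_class_in_def t tauY_def by auto
qed

lemma rep_class_in_traces:
  assumes "rep_class_in G (x, y, z)"
  shows "\<exists>A \<in> G. trace A = of_real x" "\<exists>A \<in> G. trace A = of_real y" "\<exists>A \<in> G. trace A = of_real z"
  using assms mult_closed unfolding rep_class_in_def by auto

end

definition commutator_trace :: "triple \<Rightarrow> real" where
  "commutator_trace t = (case t of (x, y, z) \<Rightarrow> x\<^sup>2 + y\<^sup>2 + z\<^sup>2 - x * y * z - 2)"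

fun two_coords_zero :: "'a::zero \<times> 'a \<times> 'a \<Rightarrow> bool" where
  "two_coords_zero (x, y, z) \<longleftrightarrow> x = 0 \<and> y = 0 \<or> x = 0 \<and> z = 0 \<or> y = 0 \<and> z = 0"

definition pin_rot :: "real \<Rightarrow> cmat2" where
  "pin_rot \<theta> = cos \<theta> *\<^sub>R mat 1 + sin \<theta> *\<^sub>R qJ"

definition pin_refl :: "real \<Rightarrow> cmat2" where
  "pin_refl \<theta> = cos \<theta> *\<^sub>R qK + sin \<theta> *\<^sub>R qI"

lemma pin_rot_in_Pin2: "pin_rot \<theta> \<in> Pin2"
  unfolding Pin2_def pin_rot_def by blast

lemma pin_refl_in_Pin2: "pin_refl \<theta> \<in> Pin2"
  unfolding Pin2_def pin_refl_def by blast

lemma pin_rot_eq_mat2: "pin_rot \<theta> = mat2 (cos \<theta>) (sin \<theta>) (- sin \<theta>) (cos \<theta>)"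
  unfolding pin_rot_def mat_1_eq_mat2 qJ_def scaleR_mat2 add_mat2
  by (simp add: mat2_eq_iff scaleR_conv_of_real)

lemma pin_refl_eq_mat2: "pin_refl \<theta> = mat2 (\<i> * sin \<theta>) (\<i> * cos \<theta>) (\<i> * cos \<theta>) (- \<i> * sin \<theta>)"
  unfolding pin_refl_def qK_def qI_def scaleR_mat2 add_mat2
  by (simp add: mat2_eq_iff scaleR_conv_of_real)

lemma trace_pin_rot: "trace (pin_rot \<theta>) = of_real (2 * cos \<theta>)"
  and trace_pin_refl: "trace (pin_refl \<theta>) = 0"
  and trace_pin_rot_mult: "trace (pin_rot \<alpha> ** pin_rot \<beta>) = of_real (2 * cos (\<alpha> + \<beta>))"
  and trace_pin_refl_mult: "trace (pin_refl \<alpha> ** pin_refl \<beta>) = of_real (- 2 * cos (\<alpha> - \<beta>))"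
  and trace_pin_rot_refl: "trace (pin_rot \<alpha> ** pin_refl \<beta>) = 0"
  and trace_pin_refl_rot: "trace (pin_refl \<alpha> ** pin_rot \<beta>) = 0"
  by (simp_all add: pin_rot_eq_mat2 pin_refl_eq_mat2 mat2_mult trace_mat2 cos_add cos_diff complex_eq_iff)

lemma two_cos_arccos: "\<bar>x\<bar> \<le> 2 \<Longrightarrow> 2 * cos (arccos (x / 2)) = x"
  by (subst cos_arccos) auto

lemma rep_class_in_Pin2_if_commutator_trace:
  assumes "\<bar>x\<bar> \<le> 2" "\<bar>y\<bar> \<le> 2" and "commutator_trace (x, y, z) = 2"
  shows "rep_class_in Pin2 (x, y, z)"
proof -
  define \<alpha> \<beta> where "\<alpha> = arccos (x / 2)" and "\<beta> = arccos (y / 2)"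
  have x: "cos \<alpha> = x / 2" and y: "cos \<beta> = y / 2"
    using assms two_cos_arccos by (auto simp: \<alpha>_def \<beta>_def)
  have "(z - 2 * cos (\<alpha> + \<beta>)) * (z - 2 * cos (\<alpha> - \<beta>))
      = z\<^sup>2 - 4 * z * cos \<alpha> * cos \<beta> + 4 * ((cos \<alpha>)\<^sup>2 * (cos \<beta>)\<^sup>2 - (sin \<alpha>)\<^sup>2 * (sin \<beta>)\<^sup>2)"
    unfolding cos_add cos_diff by algebra
  also have "\<dots> = commutator_trace (x, y, z) - 2"
    unfolding sin_squared_eq x y commutator_trace_def by (simp add: power2_eq_square algebra_simps)
  finally have "z = 2 * cos (\<alpha> + \<beta>) \<or> z = 2 * cos (\<alpha> + - \<beta>)"
    using assms(3) by simp
  moreover have "y = 2 * cos \<beta>" "y = 2 * cos (- \<beta>)" using y by simp_all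
  ultimately obtain \<beta>' where "y = 2 * cos \<beta>'" "z = 2 * cos (\<alpha> + \<beta>')"
    by blast
  moreover have "x = 2 * cos \<alpha>" using x by simp
  ultimately show ?thesis unfolding rep_class_in_def
    by (intro bexI[of _ "pin_rot \<alpha>"] bexI[of _ "pin_rot \<beta>'"])
      (simp_all add: pin_rot_in_Pin2 trace_pin_rot trace_pin_rot_mult)
qed

lemma rep_class_in_Pin2_if_two_coords_zero:
  assumes "\<bar>x\<bar> \<le> 2" "\<bar>y\<bar> \<le> 2" "\<bar>z\<bar> \<le> 2" and "two_coords_zero (x, y, z)"
  shows "rep_class_in Pin2 (x, y, z)"
proof -
  from assms(4) consider "x = 0" "y = 0" | "x = 0" "z = 0" | "y = 0" "z = 0"
    by auto
  then show ?thesis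
  proof cases
    case 1
    then show ?thesis unfolding rep_class_in_def using two_cos_arccos[of "- z"] assms(3)
      by (intro bexI[of _ "pin_refl 0"] bexI[of _ "pin_refl (arccos (- z / 2))"])
        (simp_all add: pin_refl_in_Pin2 trace_pin_refl trace_pin_refl_mult)
  next
    case 2
    then show ?thesis unfolding rep_class_in_def using two_cos_arccos[of y] assms(2)
      by (intro bexI[of _ "pin_refl 0"] bexI[of _ "pin_rot (arccos (y / 2))"])
        (simp_all add: pin_refl_in_Pin2 pin_rot_in_Pin2 trace_pin_refl trace_pin_rot trace_pin_refl_rot)
  next
    case 3
    then show ?thesis unfolding rep_class_in_def using two_cos_arccos[of x] assms(1)
      by (intro bexI[of _ "pin_rot (arccos (x / 2))"] bexI[of _ "pin_refl 0"])
        (simp_all add: pin_refl_in_Pin2 pin_rot_in_Pin2 trace_pin_refl trace_pin_rot trace_pin_rot_refl)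
  qed
qed

section \<open>Quadratic integers\<close>

text \<open>A pair \<open>(a, b)\<close> encodes \<open>a + b w\<close>, where \<open>w\<^sup>2 = m + n w\<close>.\<close>

type_synonym qint = "int \<times> int"
type_synonym qtriple = "qint \<times> qint \<times> qint"

definition qval :: "real \<Rightarrow> qint \<Rightarrow> real" where
  "qval w a = of_int (fst a) + of_int (snd a) * w"

fun qval3 :: "real \<Rightarrow> qtriple \<Rightarrow> triple" where
  "qval3 w (a, b, c) = (qval w a, qval w b, qval w c)"

fun qmul :: "int \<Rightarrow> int \<Rightarrow> qint \<Rightarrow> qint \<Rightarrow> qint" where
  "qmul m n (a, b) (c, d) = (a * c + m * b * d, a * d + b * c + n * b * d)"

lemma qval_Pair [simp]: "qval w (a, b) = of_int a + of_int b * w"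
  by (simp add: qval_def)

lemma qval_zero [simp]: "qval w 0 = 0"
  and qval_add [simp]: "qval w (p + q) = qval w p + qval w q"
  and qval_diff [simp]: "qval w (p - q) = qval w p - qval w q"
  and qval_uminus [simp]: "qval w (- p) = - qval w p"
  by (simp_all add: qval_def algebra_simps)

lemma qval3_add [simp]: "qval3 w (s + t) = qval3 w s + qval3 w t"
  by (cases s rule: prod_cases3, cases t rule: prod_cases3) simp

lemma qval3_diff [simp]: "qval3 w (s - t) = qval3 w s - qval3 w t"
  by (cases s rule: prod_cases3, cases t rule: prod_cases3) simp

lemma int_square_eq_prime_mult_square:
  fixes k l p :: int
  assumes "prime p" and eq: "k\<^sup>2 = p * l\<^sup>2"
  shows "l = 0"
proof (rule ccontr)
  assume "l \<noteq> 0"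
  with eq \<open>prime p\<close> have "k \<noteq> 0" by auto
  have p: "prime_elem p" "p \<noteq> 0" using \<open>prime p\<close> by auto
  have "2 * multiplicity p k = multiplicity p (k\<^sup>2)"
    using p(1) \<open>k \<noteq> 0\<close> by (simp add: prime_elem_multiplicity_power_distrib)
  also have "\<dots> = multiplicity p (p * l\<^sup>2)"
    using eq by simp
  also have "\<dots> = multiplicity p p + multiplicity p (l\<^sup>2)"
    using p \<open>l \<noteq> 0\<close> by (simp add: prime_elem_multiplicity_mult_distrib)
  also have "\<dots> = 1 + 2 * multiplicity p l"
    using p \<open>l \<noteq> 0\<close> by (simp add: prime_elem_multiplicity_power_distrib)
  finally show False by presburger
qed

lemma sqrt_prime_irrational:
  assumes "prime (p::int)"
  shows "sqrt (of_int p) \<notin> \<rat>"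
proof
  assume "sqrt (of_int p) \<in> \<rat>"
  then obtain i j :: int where "j > 0" and ij: "sqrt (of_int p) = of_int i / of_int j"
    by (rule Rats_cases')
  have "p \<ge> 0" using assms by (simp add: prime_ge_0_int)
  then have "of_int p = (of_int i / of_int j :: real)\<^sup>2"
    unfolding ij[symmetric] by simp
  then have "real_of_int (i\<^sup>2) = real_of_int (p * j\<^sup>2)"
    using \<open>j > 0\<close> by (simp add: power_divide field_simps)
  then have "i\<^sup>2 = p * j\<^sup>2"
    by (simp only: of_int_eq_iff)
  then have "j = 0"
    using assms by (rule int_square_eq_prime_mult_square[rotated])
  with \<open>j > 0\<close> show False by simp
qed

locale quadratic_irrational =
  fixes w :: real and m n :: int
  assumes square: "w\<^sup>2 = of_int m + of_int n * w"
    and irrational: "w \<notin> \<rat>"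
begin

lemma qval_qmul [simp]: "qval w (qmul m n p q) = qval w p * qval w q"
proof -
  obtain a b c d where pq: "p = (a, b)" "q = (c, d)" by (cases p, cases q)
  have "qval w p * qval w q = a * c + (a * d + b * c) * w + b * d * w\<^sup>2"
    unfolding pq by (simp add: algebra_simps power2_eq_square)
  then show ?thesis unfolding pq square by (simp add: algebra_simps)
qed

lemma inj_qval: "inj (qval w)"
proof (rule injI)
  fix p q assume eq: "qval w p = qval w q"
  obtain a b c d where pq: "p = (a, b)" "q = (c, d)" by (cases p, cases q)
  have "b = d"
  proof (rule ccontr)
    assume "b \<noteq> d"
    with eq have "w = of_int (a - c) / of_int (d - b)"
      unfolding pq by (simp add: field_simps)
    with irrational show False by simp
  qed
  with eq show "p = q" unfolding pq by simp
qed

lemma qval_eq_iff [simp]: "qval w p = qval w q \<longleftrightarrow> p = q"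
  using inj_qval by (auto dest: injD)

lemma qval3_eq_iff [simp]: "qval3 w s = qval3 w t \<longleftrightarrow> s = t"
  by (cases s rule: prod_cases3, cases t rule: prod_cases3) simp

end

lemma golden_square: "golden\<^sup>2 = of_int 1 + of_int 1 * golden"
  by (simp add: golden_def power2_eq_square algebra_simps)

lemma golden_irrational: "golden \<notin> \<rat>"
proof
  assume "golden \<in> \<rat>"
  then have "2 * golden - 1 \<in> \<rat>" by simp
  moreover have "2 * golden - 1 = sqrt (of_int 5)" by (simp add: golden_def field_simps)
  ultimately show False using sqrt_prime_irrational[of 5] by simp
qed

global_interpretation golden: quadratic_irrational golden 1 1
  by unfold_locales (rule golden_square, rule golden_irrational)

global_interpretation sqrt2: quadratic_irrational "sqrt 2" 2 0
  using sqrt_prime_irrational[of 2] by unfold_locales simp_all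

fun qtauX :: "int \<Rightarrow> int \<Rightarrow> qtriple \<Rightarrow> qtriple" where
  "qtauX m n (x, y, z) = (x, z, qmul m n x z - y)"

fun qtauY :: "int \<Rightarrow> int \<Rightarrow> qtriple \<Rightarrow> qtriple" where
  "qtauY m n (x, y, z) = (z, y, qmul m n y z - x)"

fun qtauX_inv :: "int \<Rightarrow> int \<Rightarrow> qtriple \<Rightarrow> qtriple" where
  "qtauX_inv m n (x, y, z) = (x, qmul m n x y - z, y)"

fun qtauY_inv :: "int \<Rightarrow> int \<Rightarrow> qtriple \<Rightarrow> qtriple" where
  "qtauY_inv m n (x, y, z) = (qmul m n y x - z, y, x)"

fun qcommutator_trace :: "int \<Rightarrow> int \<Rightarrow> qtriple \<Rightarrow> qint" where
  "qcommutator_trace m n (x, y, z) =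
     qmul m n x x + qmul m n y y + qmul m n z z - qmul m n (qmul m n x y) z - (2, 0)"

fun qdot :: "int \<Rightarrow> int \<Rightarrow> qtriple \<Rightarrow> qtriple \<Rightarrow> qint" where
  "qdot m n (x1, x2, x3) (y1, y2, y3) = qmul m n x1 y1 + qmul m n x2 y2 + qmul m n x3 y3"

fun qtriple_product :: "int \<Rightarrow> int \<Rightarrow> qtriple \<Rightarrow> qtriple \<Rightarrow> qtriple \<Rightarrow> qint" where
  "qtriple_product m n (x1, x2, x3) (y1, y2, y3) (z1, z2, z3) =
     qmul m n x1 (qmul m n y2 z3 - qmul m n y3 z2) + qmul m n x2 (qmul m n y3 z1 - qmul m n y1 z3)
       + qmul m n x3 (qmul m n y1 z2 - qmul m n y2 z1)"

fun qscale :: "int \<Rightarrow> int \<Rightarrow> qint \<Rightarrow> qtriple \<Rightarrow> qtriple" where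
  "qscale m n k (x, y, z) = (qmul m n k x, qmul m n k y, qmul m n k z)"

fun qframe_map :: "int \<Rightarrow> int \<Rightarrow> qtriple \<Rightarrow> qtriple \<Rightarrow> qtriple \<Rightarrow> qtriple \<Rightarrow> qtriple" where
  "qframe_map m n c1 c2 c3 (x, y, z) =
     qscale m n x (c1 + c2) + qscale m n y (c1 + c3) - qscale m n z (c2 + c3)"

definition qframe_trace :: "qtriple \<Rightarrow> qtriple \<Rightarrow> qtriple \<Rightarrow> qint" where
  "qframe_trace c1 c2 c3 = fst (c1 + c2) + fst (snd (c1 + c3)) - snd (snd (c2 + c3))"

context quadratic_irrational
begin

lemma qval3_qtauX: "qval3 w (qtauX m n t) = tauX (qval3 w t)"
  and qval3_qtauY: "qval3 w (qtauY m n t) = tauY (qval3 w t)"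
  and qval3_qtauX_inv: "qval3 w (qtauX_inv m n t) = tauX_inv (qval3 w t)"
  and qval3_qtauY_inv: "qval3 w (qtauY_inv m n t) = tauY_inv (qval3 w t)"
  by (cases t rule: prod_cases3; simp add: tauX_def tauY_def tauX_inv_def tauY_inv_def)+

lemma qval_qcommutator_trace: "qval w (qcommutator_trace m n t) = commutator_trace (qval3 w t)"
  by (cases t rule: prod_cases3) (simp add: commutator_trace_def power2_eq_square)

lemma two_coords_zero_qval3: "two_coords_zero (qval3 w t) \<longleftrightarrow> two_coords_zero t"
proof -
  have "qval w a = 0 \<longleftrightarrow> a = 0" for a
    using qval_eq_iff[of a 0] by simp
  then show ?thesis by (cases t rule: prod_cases3) simp
qed

lemma qval_qdot: "qval w (qdot m n s t) = inner (qval3 w s) (qval3 w t)"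
  by (cases s rule: prod_cases3, cases t rule: prod_cases3) (simp add: inner_real_def)

lemma qval_qtriple_product:
  "qval w (qtriple_product m n s t u) = triple_product (qval3 w s) (qval3 w t) (qval3 w u)"
  by (cases s rule: prod_cases3, cases t rule: prod_cases3, cases u rule: prod_cases3) simp

lemma qval3_qscale: "qval3 w (qscale m n k t) = qval w k *\<^sub>R qval3 w t"
  by (cases t rule: prod_cases3) simp

lemma qval3_qframe_map:
  "qval3 w (qframe_map m n c1 c2 c3 c) = frame_map (qval3 w c1) (qval3 w c2) (qval3 w c3) (qval3 w c)"
  by (cases c rule: prod_cases3) (simp add: qval3_qscale)

lemma qval_qframe_trace:
  "qval w (qframe_trace c1 c2 c3) = frame_trace (qval3 w c1) (qval3 w c2) (qval3 w c3)"
  by (cases c1 rule: prod_cases3, cases c2 rule: prod_cases3, cases c3 rule: prod_cases3)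
    (simp add: qframe_trace_def frame_trace_def)

end

section \<open>The finite classification\<close>

fun coord_perms :: "'a \<times> 'a \<times> 'a \<Rightarrow> ('a \<times> 'a \<times> 'a) list" where
  "coord_perms (a, b, c) = [(a, b, c), (a, c, b), (b, a, c), (b, c, a), (c, a, b), (c, b, a)]"

fun even_sign_changes :: "'a::uminus \<times> 'a \<times> 'a \<Rightarrow> ('a \<times> 'a \<times> 'a) list" where
  "even_sign_changes (a, b, c) = [(a, b, c), (a, - b, - c), (- a, b, - c), (- a, - b, c)]"

definition S_orbit :: "'a::uminus \<times> 'a \<times> 'a \<Rightarrow> ('a \<times> 'a \<times> 'a) list" where
  "S_orbit t = concat (map even_sign_changes (coord_perms t))"

lemma S_equiv_if_mem_S_orbit:
  assumes "u \<in> set (S_orbit t)"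
  shows "S_equiv t u"
proof -
  obtain a b c where t: "t = (a, b, c)" by (cases t rule: prod_cases3)
  from assms show ?thesis
    unfolding t S_orbit_def S_equiv_def
    by (auto simp: conj_disj_distribR ex_disj_distrib)
qed

fun in_grid :: "qint list \<Rightarrow> qtriple \<Rightarrow> bool" where
  "in_grid T (a, b, c) \<longleftrightarrow> a \<in> set T \<and> b \<in> set T \<and> c \<in> set T"

fun escapes :: "int \<Rightarrow> int \<Rightarrow> qint list \<Rightarrow> nat \<Rightarrow> qtriple \<Rightarrow> bool" where
  "escapes m n T 0 t \<longleftrightarrow> \<not> in_grid T t"
| "escapes m n T (Suc k) t \<longleftrightarrow>
     \<not> in_grid T t \<or> escapes m n T k (qtauX m n t) \<or> escapes m n T k (qtauY m n t)"

definition reaches_target :: "int \<Rightarrow> int \<Rightarrow> qtriple list \<Rightarrow> qtriple \<Rightarrow> bool" where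
  "reaches_target m n W t \<longleftrightarrow> (\<exists>u \<in> set [t, qtauX m n t, qtauY m n t, qtauX_inv m n t, qtauY_inv m n t].
     \<exists>v \<in> set (S_orbit u). v \<in> set W)"

text \<open>The disjuncts are ordered from cheap to expensive: \<open>code_simp\<close> stops at the first true one.\<close>

definition grid_classified :: "int \<Rightarrow> int \<Rightarrow> qint list \<Rightarrow> qtriple list \<Rightarrow> bool" where
  "grid_classified m n T W \<longleftrightarrow> (\<forall>a \<in> set T. \<forall>b \<in> set T. \<forall>c \<in> set T.
     qcommutator_trace m n (a, b, c) = (2, 0) \<or> two_coords_zero (a, b, c) \<or>
     escapes m n T 4 (a, b, c) \<or> reaches_target m n W (a, b, c))"

text \<open>Necessary conditions for \<open>c\<^sub>1, c\<^sub>2, c\<^sub>3\<close> to be the images of the frame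
  \<open>(1,1,1), (1,-1,-1), (-1,1,-1)\<close> under a rotation permuting \<open>V\<close>.\<close>

definition symmetry_frame :: "int \<Rightarrow> int \<Rightarrow> qtriple list \<Rightarrow> qtriple \<Rightarrow> qtriple \<Rightarrow> qtriple \<Rightarrow> bool" where
  "symmetry_frame m n V c1 c2 c3 \<longleftrightarrow>
     qdot m n c1 c2 = (-1, 0) \<and> qdot m n c1 c3 = (-1, 0) \<and> qdot m n c2 c3 = (-1, 0) \<and>
     qtriple_product m n c1 c2 c3 = (4, 0) \<and>
     (\<forall>c \<in> set V. qframe_map m n c1 c2 c3 c \<in> set (map (qscale m n (2, 0)) V))"

definition frame_traces_within :: "int \<Rightarrow> int \<Rightarrow> qtriple list \<Rightarrow> qint list \<Rightarrow> bool" where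
  "frame_traces_within m n V R \<longleftrightarrow> (\<forall>c1 \<in> set V. \<forall>c2 \<in> set V. \<forall>c3 \<in> set V.
     symmetry_frame m n V c1 c2 c3 \<longrightarrow>
     (\<exists>r \<in> set R. qframe_trace c1 c2 c3 = qmul m n (2, 0) (qmul m n r r) - (2, 0)))"

definition symmetrize :: "qint list \<Rightarrow> qint list" where
  "symmetrize R = remdups (R @ map uminus R)"

context quadratic_irrational
begin

lemma S_orbit_qval3: "S_orbit (qval3 w t) = map (qval3 w) (S_orbit t)"
  by (cases t rule: prod_cases3) (simp add: S_orbit_def)

lemma not_invariant_if_escapes:
  assumes closed: "\<And>t. P t \<Longrightarrow> P (tauX t)" "\<And>t. P t \<Longrightarrow> P (tauY t)"
    and grid: "\<And>t. P t \<Longrightarrow> \<exists>c. in_grid T c \<and> t = qval3 w c"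
  shows "escapes m n T k c \<Longrightarrow> \<not> P (qval3 w c)"
proof (induction k arbitrary: c)
  have in_grid: "in_grid T c" if "P (qval3 w c)" for c
    using grid[OF that] by (metis qval3_eq_iff)
  {
    case 0
    then show ?case using in_grid by (metis escapes.simps(1))
  next
    case (Suc k)
    show ?case
    proof
      assume P: "P (qval3 w c)"
      then have "in_grid T c" by (rule in_grid)
      then have "escapes m n T k (qtauX m n c) \<or> escapes m n T k (qtauY m n c)"
        using Suc.prems by simp
      moreover have "P (qval3 w (qtauX m n c))" "P (qval3 w (qtauY m n c))"
        using closed P by (simp_all add: qval3_qtauX qval3_qtauY)
      ultimately show False using Suc.IH by blast
    qed
  }
qed

lemma S_equiv_target_if_reaches:
  assumes "reaches_target m n W c"
  shows "\<exists>\<gamma> \<in> Gamma. \<exists>u \<in> set W. S_equiv (\<gamma> (qval3 w c)) (qval3 w u)"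
proof -
  obtain u v where u: "u \<in> set [c, qtauX m n c, qtauY m n c, qtauX_inv m n c, qtauY_inv m n c]"
    and v: "v \<in> set (S_orbit u)" "v \<in> set W"
    using assms unfolding reaches_target_def by blast
  obtain \<gamma> where "\<gamma> \<in> Gamma" "qval3 w u = \<gamma> (qval3 w c)"
    using u Gamma_generators
    by (auto simp: qval3_qtauX qval3_qtauY qval3_qtauX_inv qval3_qtauY_inv)
  moreover have "S_equiv (qval3 w u) (qval3 w v)"
    using v(1) by (intro S_equiv_if_mem_S_orbit) (simp add: S_orbit_qval3)
  ultimately show ?thesis using v(2) by metis
qed

lemma rep_class_in_grid:
  assumes "mult_closed_SU2 G"
    and traces: "\<And>A. A \<in> G \<Longrightarrow> trace A \<in> of_real ` qval w ` set T"
    and "rep_class_in G t"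
  shows "\<exists>c. in_grid T c \<and> t = qval3 w c"
proof -
  interpret mult_closed_SU2 G by fact
  have trace_values: "s \<in> qval w ` set T" if "\<exists>A \<in> G. trace A = of_real s" for s
  proof -
    from that obtain A where "A \<in> G" "trace A = of_real s" by blast
    with traces[of A] obtain x where "x \<in> set T" "of_real s = (of_real (qval w x) :: complex)"
      by (auto simp del: qval_Pair)
    then show ?thesis by (auto simp del: qval_Pair)
  qed
  obtain x y z where t: "t = (x, y, z)" by (cases t rule: prod_cases3)
  have "x \<in> qval w ` set T" "y \<in> qval w ` set T" "z \<in> qval w ` set T"
    using rep_class_in_traces[OF \<open>rep_class_in G t\<close>[unfolded t]] trace_values by blast+
  then obtain a b c where "a \<in> set T" "b \<in> set T" "c \<in> set T"
    "x = qval w a" "y = qval w b" "z = qval w c"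
    by blast
  then show ?thesis unfolding t by (intro exI[of _ "(a, b, c)"]) simp
qed

lemma rep_class_classification:
  assumes G: "mult_closed_SU2 G"
    and traces: "\<And>A. A \<in> G \<Longrightarrow> trace A \<in> of_real ` qval w ` set T"
    and check: "grid_classified m n T W"
    and t: "t \<in> Eset" "rep_class_in G t" "\<not> rep_class_in Pin2 t"
  shows "\<exists>\<gamma> \<in> Gamma. \<exists>u \<in> set W. S_equiv (\<gamma> t) (qval3 w u)"
proof -
  interpret mult_closed_SU2 G by fact
  note grid = rep_class_in_grid[OF G traces]
  obtain c where c: "in_grid T c" "t = qval3 w c"
    using grid t(2) by blast
  obtain x y z where xyz: "t = (x, y, z)" by (cases t rule: prod_cases3)
  have bounds: "\<bar>x\<bar> \<le> 2" "\<bar>y\<bar> \<le> 2" "\<bar>z\<bar> \<le> 2"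
    using t(1) unfolding xyz Eset_def by auto
  have "qcommutator_trace m n c = (2, 0) \<or> two_coords_zero c \<or> escapes m n T 4 c \<or> reaches_target m n W c"
    using check c(1) unfolding grid_classified_def by (cases c rule: prod_cases3) auto
  moreover have "qcommutator_trace m n c \<noteq> (2, 0)" "\<not> two_coords_zero c"
  proof -
    have "commutator_trace (x, y, z) \<noteq> 2" "\<not> two_coords_zero (x, y, z)"
      using t(3) bounds rep_class_in_Pin2_if_commutator_trace rep_class_in_Pin2_if_two_coords_zero
      unfolding xyz by blast+
    moreover have "qval3 w c = (x, y, z)" using c(2) xyz by simp
    ultimately show "qcommutator_trace m n c \<noteq> (2, 0)" "\<not> two_coords_zero c"
      using qval_qcommutator_trace[of c] two_coords_zero_qval3[of c] by auto
  qed
  moreover have "\<not> escapes m n T 4 c"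
    using not_invariant_if_escapes[OF rep_class_in_tauX rep_class_in_tauY grid] t(2) c(2) by blast
  ultimately show ?thesis
    using S_equiv_target_if_reaches c(2) by auto
qed

lemma symmetry_frame_quat_rot:
  assumes V: "V = qval3 w ` set Vc" and A: "quat_mat a b c d \<in> preimage_rot V"
    and unit: "a\<^sup>2 + b\<^sup>2 + c\<^sup>2 + d\<^sup>2 = 1"
    and images: "quat_rot a b c d (1, 1, 1) = qval3 w c1" "quat_rot a b c d (1, -1, -1) = qval3 w c2"
      "quat_rot a b c d (-1, 1, -1) = qval3 w c3"
  shows "symmetry_frame m n Vc c1 c2 c3"
proof -
  have "qval w (qdot m n c1 c2) = qval w (-1, 0)" "qval w (qdot m n c1 c3) = qval w (-1, 0)"
    "qval w (qdot m n c2 c3) = qval w (-1, 0)"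
    "qval w (qtriple_product m n c1 c2 c3) = qval w (4, 0)"
    by (simp_all add: qval_qdot qval_qtriple_product flip: images
        add: inner_quat_rot triple_product_quat_rot unit)
  then have gram: "qdot m n c1 c2 = (-1, 0)" "qdot m n c1 c3 = (-1, 0)" "qdot m n c2 c3 = (-1, 0)"
    and orientation: "qtriple_product m n c1 c2 c3 = (4, 0)"
    by (simp_all only: qval_eq_iff)
  have "qframe_map m n c1 c2 c3 e \<in> set (map (qscale m n (2, 0)) Vc)" if "e \<in> set Vc" for e
  proof -
    have "quat_rot a b c d (qval3 w e) \<in> qval3 w ` set Vc"
      using quat_rot_mem_preimage_rot[OF A] that V by blast
    then obtain e' where e': "e' \<in> set Vc" "quat_rot a b c d (qval3 w e) = qval3 w e'"
      by blast
    have "qval3 w (qframe_map m n c1 c2 c3 e) = 2 *\<^sub>R quat_rot a b c d (qval3 w e)"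
      by (simp add: qval3_qframe_map frame_map_quat_rot flip: images)
    also have "\<dots> = qval3 w (qscale m n (2, 0) e')"
      by (simp add: qval3_qscale e')
    finally show ?thesis using e' by simp
  qed
  with gram orientation show ?thesis
    unfolding symmetry_frame_def by blast
qed

lemma trace_preimage_rot:
  assumes V: "V = qval3 w ` set Vc"
    and frame: "(1, 1, 1) \<in> V" "(1, -1, -1) \<in> V" "(-1, 1, -1) \<in> V"
    and check: "frame_traces_within m n Vc R"
    and A: "A \<in> preimage_rot V"
  shows "trace A \<in> of_real ` qval w ` set (symmetrize R)"
proof -
  obtain a b c d where A_eq: "A = quat_mat a b c d" and unit: "a\<^sup>2 + b\<^sup>2 + c\<^sup>2 + d\<^sup>2 = 1"
    using A preimage_rot_subset_SU2 SU2_quat_mat by blast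
  note rot = quat_rot_mem_preimage_rot[OF A[unfolded A_eq]]
  obtain c1 c2 c3 where cs: "c1 \<in> set Vc" "c2 \<in> set Vc" "c3 \<in> set Vc"
    and images: "quat_rot a b c d (1, 1, 1) = qval3 w c1" "quat_rot a b c d (1, -1, -1) = qval3 w c2"
      "quat_rot a b c d (-1, 1, -1) = qval3 w c3"
    using rot[OF frame(1)] rot[OF frame(2)] rot[OF frame(3)] unfolding V by blast
  have "symmetry_frame m n Vc c1 c2 c3"
    using V A unit images unfolding A_eq by (rule symmetry_frame_quat_rot)
  then obtain r where "r \<in> set R" and r: "qframe_trace c1 c2 c3 = qmul m n (2, 0) (qmul m n r r) - (2, 0)"
    using check cs unfolding frame_traces_within_def by blast
  have "2 * (qval w r)\<^sup>2 - 2 = frame_trace (qval3 w c1) (qval3 w c2) (qval3 w c3)"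
    using arg_cong[OF r, of "qval w"] by (simp add: qval_qframe_trace power2_eq_square)
  also have "\<dots> = 2 * (2 * a)\<^sup>2 - 2"
    using unit by (simp add: frame_trace_quat_rot power2_eq_square algebra_simps flip: images)
  finally have "(2 * a)\<^sup>2 = (qval w r)\<^sup>2"
    by simp
  then have "2 * a = qval w r \<or> 2 * a = qval w (- r)"
    unfolding power2_eq_iff by simp
  moreover have "r \<in> set (symmetrize R)" "- r \<in> set (symmetrize R)"
    using \<open>r \<in> set R\<close> by (auto simp: symmetrize_def)
  ultimately have "2 * a \<in> qval w ` set (symmetrize R)"
    by blast
  then show ?thesis
    unfolding A_eq trace_quat_mat by (rule imageI)
qed

end

section \<open>The binary octahedral and icosahedral groups\<close>

definition cube_codes :: "qtriple list" where
  "cube_codes = [(a, b, c). a \<leftarrow> [(1, 0), (-1, 0)], b \<leftarrow> [(1, 0), (-1, 0)], c \<leftarrow> [(1, 0), (-1, 0)]]"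

text \<open>Coordinates in \<open>\<int>[\<phi>]\<close>, using \<open>1/\<phi> = \<phi> - 1\<close>.\<close>

definition dodecahedron_codes :: "qtriple list" where
  "dodecahedron_codes = cube_codes
     @ [((0, 0), b, c). b \<leftarrow> [(-1, 1), (1, -1)], c \<leftarrow> [(0, 1), (0, -1)]]
     @ [(a, b, (0, 0)). a \<leftarrow> [(-1, 1), (1, -1)], b \<leftarrow> [(0, 1), (0, -1)]]
     @ [(a, (0, 0), c). a \<leftarrow> [(0, 1), (0, -1)], c \<leftarrow> [(-1, 1), (1, -1)]]"

definition Cgrp_abs_traces :: "qint list" where
  "Cgrp_abs_traces = [(2, 0), (0, 1), (1, 0), (0, 0)]"

definition Dgrp_abs_traces :: "qint list" where
  "Dgrp_abs_traces = [(2, 0), (0, 1), (-1, 1), (1, 0), (0, 0)]"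

definition Cgrp_targets :: "qtriple list" where
  "Cgrp_targets = [((0, 1), (1, 0), (0, 1)), ((1, 0), (1, 0), (1, 0))]"

definition Dgrp_targets :: "qtriple list" where
  "Dgrp_targets = [((1, 0), (1, 0), (1, 0)), ((1, -1), (-1, 1), (-1, 1)), ((1, -1), (1, -1), (1, 0)),
     ((0, 1), (0, -1), (0, -1)), ((0, 1), (1, 0), (0, 1)), ((1, 0), (0, 1), (1, 0)),
     ((1, 0), (-1, 1), (-1, 0)), ((1, 0), (0, 1), (-1, 1))]"

lemma frame_traces_cube: "frame_traces_within 2 0 cube_codes Cgrp_abs_traces"
  by code_simp

lemma frame_traces_dodecahedron: "frame_traces_within 1 1 dodecahedron_codes Dgrp_abs_traces"
  by code_simp

lemma grid_classified_Cgrp: "grid_classified 2 0 (symmetrize Cgrp_abs_traces) Cgrp_targets"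
  by code_simp

lemma grid_classified_Dgrp: "grid_classified 1 1 (symmetrize Dgrp_abs_traces) Dgrp_targets"
  by code_simp

lemma golden_inverse: "1 / golden = golden - 1"
proof -
  have "golden * (golden - 1) = 1"
    using golden_square by (simp add: power2_eq_square algebra_simps)
  moreover have "golden > 0"
    by (simp add: golden_def add_pos_nonneg)
  ultimately show ?thesis by (simp add: field_simps)
qed

lemma cube_vertices_codes: "cube_vertices = qval3 w ` set cube_codes"
  by (auto simp: cube_vertices_def cube_codes_def)

lemma dodecahedron_vertices_codes: "dodecahedron_vertices = qval3 golden ` set dodecahedron_codes"
proof -
  have codes: "qval golden (0, 0) = 0" "qval golden (1, 0) = 1" "qval golden (-1, 0) = -1"
    "qval golden (0, 1) = golden" "qval golden (0, -1) = - golden"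
    "qval golden (-1, 1) = 1 / golden" "qval golden (1, -1) = - 1 / golden"
    by (simp_all add: golden_inverse)
  show ?thesis
    unfolding dodecahedron_vertices_def dodecahedron_codes_def cube_vertices_codes[of golden]
    by (auto simp del: qval_Pair simp add: codes)
qed

lemma mult_closed_preimage_rot: "mult_closed_SU2 (preimage_rot V)"
  by unfold_locales (simp_all add: preimage_rot_subset_SU2 preimage_rot_mult)

lemma Cgrp_traces: "A \<in> Cgrp \<Longrightarrow> trace A \<in> of_real ` qval (sqrt 2) ` set (symmetrize Cgrp_abs_traces)"
  unfolding Cgrp_def
  by (rule sqrt2.trace_preimage_rot[OF cube_vertices_codes _ _ _ frame_traces_cube])
    (auto simp: cube_vertices_def)

lemma Dgrp_traces: "A \<in> Dgrp \<Longrightarrow> trace A \<in> of_real ` qval golden ` set (symmetrize Dgrp_abs_traces)"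
  unfolding Dgrp_def
  by (rule golden.trace_preimage_rot[OF dodecahedron_vertices_codes _ _ _ frame_traces_dodecahedron])
    (auto simp: dodecahedron_vertices_def cube_vertices_def)

theorem mainTheorem11:
  fixes x y z :: real
  defines "r \<equiv> (sqrt 5 + 1) / 4" and "s \<equiv> (sqrt 5 - 1) / 4"
  assumes "(x, y, z) \<in> Eset"
    and "rep_class_in Cgrp (x, y, z) \<or> rep_class_in Dgrp (x, y, z)"
    and "\<not> rep_class_in Pin2 (x, y, z)"
  shows "\<exists>\<gamma>\<in>Gamma. \<exists>w \<in> {(sqrt 2, 1, sqrt 2), (1, 1, 1), (-2 * s, 2 * s, 2 * s), (-2 * s, -2 * s, 1),
            (2 * r, -2 * r, -2 * r), (2 * r, 1, 2 * r), (1, 2 * r, 1), (1, 2 * s, -1), (1, 2 * r, 2 * s)}.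
            S_equiv (\<gamma> (x, y, z)) w"
proof -
  have rs: "2 * r = golden" "-2 * r = - golden" "2 * s = golden - 1" "-2 * s = 1 - golden"
    unfolding r_def s_def golden_def by (simp_all add: field_simps)
  from assms(4) show ?thesis
  proof
    assume "rep_class_in Cgrp (x, y, z)"
    with sqrt2.rep_class_classification[OF mult_closed_preimage_rot Cgrp_traces[unfolded Cgrp_def]
        grid_classified_Cgrp assms(3)] assms(5)
    obtain \<gamma> u where "\<gamma> \<in> Gamma" "u \<in> set Cgrp_targets" "S_equiv (\<gamma> (x, y, z)) (qval3 (sqrt 2) u)"
      unfolding Cgrp_def by blast
    then show ?thesis by (auto simp: Cgrp_targets_def)
  next
    assume "rep_class_in Dgrp (x, y, z)"
    with golden.rep_class_classification[OF mult_closed_preimage_rot Dgrp_traces[unfolded Dgrp_def]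
        grid_classified_Dgrp assms(3)] assms(5)
    obtain \<gamma> u where "\<gamma> \<in> Gamma" "u \<in> set Dgrp_targets" "S_equiv (\<gamma> (x, y, z)) (qval3 golden u)"
      unfolding Dgrp_def by blast
    then show ?thesis by (auto simp: Dgrp_targets_def rs)
  qed
qed

end
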